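(* For any $0<\theta<1$, the Assouad spectrum $\dim_A^\theta$ is not stable with respect to graph sums: there exist continuous functions $g,h$ defined on a common interval $I$ such that $$\dim_A^\theta(\operatorname{Graph}(g+h))>\max\{\dim_A^\theta(\operatorname{Graph}(g)),\dim_A^\theta(\operatorname{Graph}(h))\}.$$
   Context: A notion of dimension $D$ is called stable with respect to graph sums if $D(\operatorname{Graph}(g+h))\le\max\{D(\operatorname{Graph}(g)),D(\operatorname{Graph}(h))\}$ for all continuous functions $g,h$ defined on a common interval $I$, where $\operatorname{Graph}(g)=\{(t,g(t)):t\in I\}$. For a bounded $F\subset\mathbb{R}^2$ and $r>0$, $N(F,r)$ is the least number of sets of diameter at most $r$ needed to cover $F$; $D(\mathbf z,R)$ is the closed disc of radius $R$ about $\mathbf z$. For $E\subset\mathbb{R}^2$ and $\theta\in(0,1)$, the Assouad spectrum is $\dim_A^\theta(E)=\inf\{\gamma>0:\exists C>0 \text{ s.t. } N(D(\mathbf z,R)\cap E,r)\le C(R/r)^\gamma \text{ for all } 0<r=R^{1/\theta}<R<1,\ \mathbf z\in E\}$. *)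

theory Defs
  imports "HOL-Analysis.Analysis"
begin

text \<open>Points of the plane are pairs of reals; the product metric on real \<times> real is the
Euclidean one.\<close>

definition cover_number :: "(real \<times> real) set \<Rightarrow> real \<Rightarrow> nat" where
  "cover_number F r = (LEAST n. \<exists>\<C>. finite \<C> \<and> card \<C> = n \<and> F \<subseteq> \<Union>\<C> \<and>
      (\<forall>A\<in>\<C>. bounded A \<and> diameter A \<le> r))"

definition assouad_spectrum :: "real \<Rightarrow> (real \<times> real) set \<Rightarrow> real" where
  "assouad_spectrum \<theta> E = Inf {\<gamma>. \<gamma> > 0 \<and> (\<exists>C>0. \<forall>R z. 0 < R \<and> R < 1 \<and> z \<in> E \<longrightarrow>
      real (cover_number (cball z R \<inter> E) (R powr (1 / \<theta>))) \<le> C * (R / R powr (1 / \<theta>)) powr \<gamma>)}"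

definition graph_of :: "real set \<Rightarrow> (real \<Rightarrow> real) \<Rightarrow> (real \<times> real) set" where
  "graph_of I g = (\<lambda>t. (t, g t)) ` I"

end

theory Submission
  imports Defs "HOL-Real_Asymp.Real_Asymp"
begin

(* Both g t = sin (t^2) + t^2 + t and h t = - (t^2 + t) expand distances on [0, \<infinity>):
   |x - y| \<le> |u x - u y| for u = g, h. Hence a horizontal strip of height r/2 meets their graphs in sets of
   diameter at most r, and a ball of radius R meets each graph in O(R/r) such sets: both spectra
   are at most 1. The sum sin (t^2) oscillates with period about \<pi>/t near t. For t of order 1/r a
   window of width R contains about R/r complete oscillations, and each of them crosses the
   heights 0, 2r, 4r, ..., R/2. This gives about (R/r)^2 points that are pairwise more than r
   apart, so the spectrum of the sum is at least 2. *)

section \<open>Covering numbers\<close>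

lemma bounded_imp_finite_cover_diameter_le:
  fixes F :: "'a::euclidean_space set"
  assumes "bounded F" "0 < r"
  obtains \<C> where "finite \<C>" "F \<subseteq> \<Union>\<C>" "\<forall>A\<in>\<C>. bounded A \<and> diameter A \<le> r"
proof -
  obtain c M where F: "F \<subseteq> cball c M"
    using assms(1) bounded_subset_cball by blast
  obtain k where k: "finite k" "cball c M \<subseteq> (\<Union>x\<in>k. ball x (r/2))"
    using seq_compact_imp_totally_bounded[OF compact_imp_seq_compact[OF compact_cball[of c M]]] assms(2)
    by (meson half_gt_zero)
  show thesis
    by (rule that[of "(\<lambda>x. ball x (r/2)) ` k"]) (use k F assms(2) in \<open>auto simp: diameter_ball\<close>)
qed

lemma cover_number_le_card_fibres:
  fixes c :: "real \<times> real \<Rightarrow> 'k"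
  assumes "bounded F" "finite K" "c ` F \<subseteq> K" "0 \<le> r"
    and fibre: "\<And>p q. p \<in> F \<Longrightarrow> q \<in> F \<Longrightarrow> c p = c q \<Longrightarrow> dist p q \<le> r"
  shows "cover_number F r \<le> card K"
proof -
  define A where "A k = {p \<in> F. c p = k}" for k
  have "bounded (A k) \<and> diameter (A k) \<le> r" for k
  proof
    show "bounded (A k)"
      using assms(1) by (rule bounded_subset) (auto simp: A_def)
    show "diameter (A k) \<le> r"
      using assms(4) fibre by (intro diameter_le) (auto simp: A_def dist_norm)
  qed
  then have "cover_number F r \<le> card (A ` K)"
    unfolding cover_number_def using assms(2,3)
    by (intro Least_le exI[of _ "A ` K"]) (auto simp: A_def)
  also have "\<dots> \<le> card K"
    using assms(2) by (rule card_image_le)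
  finally show ?thesis .
qed

lemma card_le_cover_number:
  assumes "bounded F" "0 < r" "P \<subseteq> F"
    and separated: "\<And>p q. p \<in> P \<Longrightarrow> q \<in> P \<Longrightarrow> p \<noteq> q \<Longrightarrow> r < dist p q"
  shows "card P \<le> cover_number F r"
proof -
  obtain \<C> where \<C>: "finite \<C>" "card \<C> = cover_number F r" "F \<subseteq> \<Union>\<C>"
      "\<forall>A\<in>\<C>. bounded A \<and> diameter A \<le> r"
  proof -
    obtain \<C> where "finite \<C>" "F \<subseteq> \<Union>\<C>" "\<forall>A\<in>\<C>. bounded A \<and> diameter A \<le> r"
      using bounded_imp_finite_cover_diameter_le[OF assms(1,2)] .
    then show thesis
      using LeastI_ex[of "\<lambda>n. \<exists>\<C>. finite \<C> \<and> card \<C> = n \<and> F \<subseteq> \<Union>\<C> \<and> (\<forall>A\<in>\<C>. bounded A \<and> diameter A \<le> r)"]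
        that unfolding cover_number_def by blast
  qed
  have "p = q" if "p \<in> P" "q \<in> P" "A \<in> \<C>" "p \<in> A" "q \<in> A" for p q A
  proof (rule ccontr)
    assume "p \<noteq> q"
    have "dist p q \<le> diameter A"
      using that \<C>(4) by (intro diameter_bounded_bound) auto
    with \<C>(4) \<open>A \<in> \<C>\<close> separated[OF that(1,2) \<open>p \<noteq> q\<close>] show False
      by force
  qed
  then have "card P \<le> card \<C>"
    using \<C>(1,3) assms(3) by (intro card_le_if_inj_on_rel[where r = "(\<in>)"]) blast+
  with \<C>(2) show ?thesis
    by simp
qed

lemma dist_le_abs_fst_plus_abs_snd:
  fixes p q :: "real \<times> real"
  shows "dist p q \<le> \<bar>fst p - fst q\<bar> + \<bar>snd p - snd q\<bar>"
  using norm_Pair_le[of "fst p - fst q" "snd p - snd q"] by (cases p, cases q) (simp add: dist_norm)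

lemma floor_divide_eq_imp_abs_diff_less:
  fixes x y \<delta> :: real
  assumes "0 < \<delta>" "\<lfloor>x / \<delta>\<rfloor> = \<lfloor>y / \<delta>\<rfloor>"
  shows "\<bar>x - y\<bar> < \<delta>"
proof -
  have "\<bar>x / \<delta> - y / \<delta>\<bar> < 1"
    using assms(2) by linarith
  then show ?thesis
    using assms(1) by (simp add: diff_divide_distrib[symmetric] abs_divide pos_divide_less_eq)
qed

lemma floor_divide_mem_floor_range:
  fixes x a R \<delta> :: real
  assumes "0 < \<delta>" "\<bar>x - a\<bar> \<le> R"
  shows "\<lfloor>x / \<delta>\<rfloor> \<in> {\<lfloor>(a - R) / \<delta>\<rfloor>..\<lfloor>(a + R) / \<delta>\<rfloor>}"
  using assms by (auto intro!: floor_mono divide_right_mono)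

lemma card_floor_range_le:
  fixes a r R :: real
  assumes "0 < r" "r \<le> R"
  shows "real (card {\<lfloor>(a - R) / (r / 2)\<rfloor>..\<lfloor>(a + R) / (r / 2)\<rfloor>}) \<le> 6 * (R / r)"
proof -
  have "real_of_int (\<lfloor>(a + R) / (r / 2)\<rfloor> - \<lfloor>(a - R) / (r / 2)\<rfloor> + 1) \<le> (a + R) / (r / 2) - (a - R) / (r / 2) + 2"
    by linarith
  also have "\<dots> = 4 * (R / r) + 2"
    by (simp add: diff_divide_distrib[symmetric])
  also have "\<dots> \<le> 6 * (R / r)"
    using assms by (simp add: field_simps)
  moreover have "\<lfloor>(a - R) / (r / 2)\<rfloor> \<le> \<lfloor>(a + R) / (r / 2)\<rfloor>"
    using assms by (intro floor_mono divide_right_mono) auto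
  ultimately show ?thesis
    by simp
qed

lemma cover_number_subset_cball_le:
  fixes F :: "(real \<times> real) set"
  assumes F: "F \<subseteq> cball z R" and r: "0 < r" "r \<le> R"
  shows "real (cover_number F r) \<le> 36 * (R / r)\<^sup>2"
proof -
  define \<delta> where "\<delta> = r / 2"
  define cells where "cells a = {\<lfloor>(a - R) / \<delta>\<rfloor>..\<lfloor>(a + R) / \<delta>\<rfloor>}" for a
  have "0 < \<delta>"
    using r by (simp add: \<delta>_def)
  have coords: "\<bar>fst p - fst z\<bar> \<le> R" "\<bar>snd p - snd z\<bar> \<le> R" if "p \<in> F" for p
    using that F dist_fst_le[of p z] dist_snd_le[of p z] by (auto simp: dist_real_def dist_commute)
  have "cover_number F r \<le> card (cells (fst z) \<times> cells (snd z))"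
  proof (rule cover_number_le_card_fibres[where c = "\<lambda>p. (\<lfloor>fst p / \<delta>\<rfloor>, \<lfloor>snd p / \<delta>\<rfloor>)"])
    show "bounded F"
      using F bounded_cball bounded_subset by blast
    show "(\<lambda>p. (\<lfloor>fst p / \<delta>\<rfloor>, \<lfloor>snd p / \<delta>\<rfloor>)) ` F \<subseteq> cells (fst z) \<times> cells (snd z)"
      using coords floor_divide_mem_floor_range[OF \<open>0 < \<delta>\<close>] by (auto simp: cells_def)
    show "dist p q \<le> r" if "p \<in> F" "q \<in> F"
      and "(\<lfloor>fst p / \<delta>\<rfloor>, \<lfloor>snd p / \<delta>\<rfloor>) = (\<lfloor>fst q / \<delta>\<rfloor>, \<lfloor>snd q / \<delta>\<rfloor>)" for p q
    proof -
      have "\<bar>fst p - fst q\<bar> < \<delta>" "\<bar>snd p - snd q\<bar> < \<delta>"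
        using that(3) floor_divide_eq_imp_abs_diff_less[OF \<open>0 < \<delta>\<close>] by auto
      then show ?thesis
        using dist_le_abs_fst_plus_abs_snd[of p q] by (simp add: \<delta>_def)
    qed
  qed (use r in \<open>auto simp: cells_def\<close>)
  also have "\<dots> = card (cells (fst z)) * card (cells (snd z))"
    by (rule card_cartesian_product)
  finally have "real (cover_number F r) \<le> real (card (cells (fst z))) * real (card (cells (snd z)))"
    by (metis of_nat_mono of_nat_mult)
  also have "\<dots> \<le> (6 * (R / r)) * (6 * (R / r))"
    using card_floor_range_le[OF r] r by (intro mult_mono) (auto simp: cells_def \<delta>_def)
  finally show ?thesis
    by (simp add: power2_eq_square)
qed

lemma cover_number_graph_le:
  assumes expanding: "\<And>x y. x \<in> I \<Longrightarrow> y \<in> I \<Longrightarrow> \<bar>x - y\<bar> \<le> \<bar>u x - u y\<bar>"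
    and r: "0 < r" "r \<le> R"
  shows "real (cover_number (cball z R \<inter> graph_of I u) r) \<le> 6 * (R / r)"
proof -
  define F where "F = cball z R \<inter> graph_of I u"
  define \<delta> where "\<delta> = r / 2"
  have "0 < \<delta>"
    using r by (simp add: \<delta>_def)
  have "cover_number F r \<le> card {\<lfloor>(snd z - R) / \<delta>\<rfloor>..\<lfloor>(snd z + R) / \<delta>\<rfloor>}"
  proof (rule cover_number_le_card_fibres[where c = "\<lambda>p. \<lfloor>snd p / \<delta>\<rfloor>"])
    show "(\<lambda>p. \<lfloor>snd p / \<delta>\<rfloor>) ` F \<subseteq> {\<lfloor>(snd z - R) / \<delta>\<rfloor>..\<lfloor>(snd z + R) / \<delta>\<rfloor>}"
    proof (intro image_subsetI floor_divide_mem_floor_range[OF \<open>0 < \<delta>\<close>])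
      show "\<bar>snd p - snd z\<bar> \<le> R" if "p \<in> F" for p
        using that dist_snd_le[of p z] by (auto simp: F_def dist_real_def dist_commute)
    qed
    show "dist p q \<le> r" if pq: "p \<in> F" "q \<in> F" "\<lfloor>snd p / \<delta>\<rfloor> = \<lfloor>snd q / \<delta>\<rfloor>" for p q
    proof -
      obtain x y where "x \<in> I" "y \<in> I" "p = (x, u x)" "q = (y, u y)"
        using pq(1,2) by (auto simp: F_def graph_of_def)
      moreover have "\<bar>snd p - snd q\<bar> < \<delta>"
        using floor_divide_eq_imp_abs_diff_less[OF \<open>0 < \<delta>\<close> pq(3)] .
      ultimately have "\<bar>fst p - fst q\<bar> < \<delta>"
        using expanding by force
      then show ?thesis
        using \<open>\<bar>snd p - snd q\<bar> < \<delta>\<close> dist_le_abs_fst_plus_abs_snd[of p q] by (simp add: \<delta>_def)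
    qed
  qed (use r in \<open>auto simp: F_def\<close>)
  then show ?thesis
    using card_floor_range_le[OF r, of "snd z"] by (simp add: F_def \<delta>_def)
qed

section \<open>Bounds for the Assouad spectrum\<close>

definition assouad_exponents :: "real \<Rightarrow> (real \<times> real) set \<Rightarrow> real set" where
  "assouad_exponents \<theta> E = {\<gamma>. \<gamma> > 0 \<and> (\<exists>C>0. \<forall>R z. 0 < R \<and> R < 1 \<and> z \<in> E \<longrightarrow>
      real (cover_number (cball z R \<inter> E) (R powr (1 / \<theta>))) \<le> C * (R / R powr (1 / \<theta>)) powr \<gamma>)}"

lemma assouad_spectrum_eq_Inf: "assouad_spectrum \<theta> E = Inf (assouad_exponents \<theta> E)"
  unfolding assouad_spectrum_def assouad_exponents_def ..

lemma assouad_spectrum_le: "\<gamma> \<in> assouad_exponents \<theta> E \<Longrightarrow> assouad_spectrum \<theta> E \<le> \<gamma>"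
  unfolding assouad_spectrum_eq_Inf
  by (rule cInf_lower) (auto simp: assouad_exponents_def intro: bdd_belowI[of _ 0])

lemma mem_assouad_exponentsI:
  fixes \<theta> :: real
  assumes "0 < \<theta>" "\<theta> \<le> 1" "0 < \<gamma>" "0 < C"
    and bound: "\<And>z R r. z \<in> E \<Longrightarrow> 0 < r \<Longrightarrow> r \<le> R \<Longrightarrow> R < 1 \<Longrightarrow>
      real (cover_number (cball z R \<inter> E) r) \<le> C * (R / r) powr \<gamma>"
  shows "\<gamma> \<in> assouad_exponents \<theta> E"
  unfolding assouad_exponents_def
proof (intro CollectI conjI exI[of _ C] allI impI)
  fix R :: real and z assume Rz: "0 < R \<and> R < 1 \<and> z \<in> E"
  have "R powr (1 / \<theta>) \<le> R powr 1"
    using assms(1,2) Rz by (intro powr_mono') auto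
  with Rz show "real (cover_number (cball z R \<inter> E) (R powr (1 / \<theta>))) \<le> C * (R / R powr (1 / \<theta>)) powr \<gamma>"
    by (intro bound) auto
qed (use assms in auto)

lemma two_mem_assouad_exponents:
  fixes \<theta> :: real
  assumes "0 < \<theta>" "\<theta> \<le> 1"
  shows "2 \<in> assouad_exponents \<theta> E"
proof (rule mem_assouad_exponentsI[OF assms, of 2 36])
  fix z and R r :: real assume "0 < r" "r \<le> R"
  then show "real (cover_number (cball z R \<inter> E) r) \<le> 36 * (R / r) powr 2"
    using cover_number_subset_cball_le[of "cball z R \<inter> E" z R r] by (simp add: powr_numeral)
qed auto

lemma assouad_spectrum_graph_le_one:
  fixes \<theta> :: real
  assumes "0 < \<theta>" "\<theta> \<le> 1"
    and expanding: "\<And>x y. x \<in> I \<Longrightarrow> y \<in> I \<Longrightarrow> \<bar>x - y\<bar> \<le> \<bar>u x - u y\<bar>"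
  shows "assouad_spectrum \<theta> (graph_of I u) \<le> 1"
proof (rule assouad_spectrum_le, rule mem_assouad_exponentsI[OF assms(1,2), of 1 6])
  fix z and R r :: real assume "0 < r" "r \<le> R"
  then show "real (cover_number (cball z R \<inter> graph_of I u) r) \<le> 6 * (R / r) powr 1"
    using cover_number_graph_le[OF expanding] by simp
qed auto

lemma assouad_spectrum_graph_nonneg_le_one:
  fixes \<theta> :: real and u :: "real \<Rightarrow> real"
  assumes "0 < \<theta>" "\<theta> \<le> 1"
    and expanding: "\<And>x y. 0 \<le> x \<Longrightarrow> x \<le> y \<Longrightarrow> y - x \<le> \<bar>u y - u x\<bar>"
  shows "assouad_spectrum \<theta> (graph_of {0..} u) \<le> 1"
proof (rule assouad_spectrum_graph_le_one[OF assms(1,2)])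
  fix x y :: real assume "x \<in> {0..}" "y \<in> {0..}"
  then show "\<bar>x - y\<bar> \<le> \<bar>u x - u y\<bar>"
    using expanding[of x y] expanding[of y x] by (cases "x \<le> y") (auto simp: abs_minus_commute)
qed

lemma le_assouad_spectrum:
  fixes \<theta> :: real
  assumes "0 < \<theta>" "\<theta> < 1" "0 < c"
    and lower: "\<forall>\<^sub>F R in at_right 0. \<exists>z\<in>E.
      c * (R / R powr (1 / \<theta>)) powr s \<le> real (cover_number (cball z R \<inter> E) (R powr (1 / \<theta>)))"
  shows "s \<le> assouad_spectrum \<theta> E"
  unfolding assouad_spectrum_eq_Inf
proof (rule cInf_greatest)
  show "assouad_exponents \<theta> E \<noteq> {}"
    using two_mem_assouad_exponents assms(1,2) by fastforce
  fix \<gamma> assume "\<gamma> \<in> assouad_exponents \<theta> E"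
  then obtain C where upper: "\<And>R z. 0 < R \<Longrightarrow> R < 1 \<Longrightarrow> z \<in> E \<Longrightarrow>
      real (cover_number (cball z R \<inter> E) (R powr (1 / \<theta>))) \<le> C * (R / R powr (1 / \<theta>)) powr \<gamma>"
    unfolding assouad_exponents_def by blast
  show "s \<le> \<gamma>"
  proof (rule ccontr)
    assume "\<not> s \<le> \<gamma>"
    have "filterlim (\<lambda>R. R / R powr (1 / \<theta>)) at_top (at_right 0)"
      using assms(1,2) by real_asymp
    moreover have "\<forall>\<^sub>F X in at_top. C * X powr \<gamma> < c * X powr s"
      using \<open>\<not> s \<le> \<gamma>\<close> \<open>0 < c\<close> by real_asymp
    ultimately have "\<forall>\<^sub>F R in at_right 0. C * (R / R powr (1 / \<theta>)) powr \<gamma> < c * (R / R powr (1 / \<theta>)) powr s"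
      by (rule eventually_compose_filterlim[rotated])
    moreover have "\<forall>\<^sub>F R in at_right 0. R \<in> {0<..<1::real}"
      by (rule eventually_at_right_real) simp
    ultimately have "\<forall>\<^sub>F R in at_right (0::real). False"
      using lower by eventually_elim (use upper in fastforce)
    then show False
      by simp
  qed
qed

section \<open>Separated points on the graph of a chirp\<close>

lemma abs_diff_eq_abs_diff_sqrt_mult:
  fixes u v :: real
  assumes "0 \<le> u" "0 \<le> v"
  shows "\<bar>u - v\<bar> = \<bar>sqrt u - sqrt v\<bar> * (sqrt u + sqrt v)"
proof -
  have "u - v = (sqrt u - sqrt v) * (sqrt u + sqrt v)"
    using assms by (simp add: algebra_simps)
  then show ?thesis
    using assms by (simp add: abs_mult)
qed

lemma sqrt_add_le_sqrt_add_half: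
  fixes a d \<epsilon> :: real
  assumes "0 \<le> a" "0 \<le> \<epsilon>" "d \<le> \<epsilon> * sqrt a"
  shows "sqrt (a + d) \<le> sqrt a + \<epsilon> / 2"
proof -
  have "a + d \<le> a + \<epsilon> * sqrt a + \<epsilon>\<^sup>2 / 4"
    using assms(3) zero_le_power2[of \<epsilon>] by linarith
  also have "\<dots> = (sqrt a + \<epsilon> / 2)\<^sup>2"
    using assms by (simp add: power2_eq_square algebra_simps)
  finally have "sqrt (a + d) \<le> sqrt ((sqrt a + \<epsilon> / 2)\<^sup>2)"
    by (rule real_sqrt_le_mono)
  then show ?thesis
    using assms by simp
qed

lemma real_nat_floor_gt_diff_one:
  fixes x :: real
  shows "x - 1 < real (nat \<lfloor>x\<rfloor>)"
  by (cases "0 \<le> x") auto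

lemma exists_sqrt_2pi_nat_between:
  fixes w :: real
  assumes "8 \<le> w"
  obtains m :: nat where "w / 4 \<le> sqrt (2 * pi * m)" "sqrt (2 * pi * m) \<le> w / 2"
proof
  define m where "m = nat \<lfloor>w\<^sup>2 / (8 * pi)\<rfloor>"
  have "real m \<le> w\<^sup>2 / (8 * pi)" "w\<^sup>2 / (8 * pi) - 1 < real m"
    using of_nat_floor real_nat_floor_gt_diff_one unfolding m_def by auto
  then have "2 * pi * m \<le> (w / 2)\<^sup>2" and "(w / 4)\<^sup>2 \<le> 2 * pi * m"
    using assms mult_mono[OF assms assms] pi_gt3 pi_less_4 by (auto simp: field_simps power2_eq_square)
  show "sqrt (2 * pi * m) \<le> w / 2"
    using assms \<open>2 * pi * m \<le> (w / 2)\<^sup>2\<close> by (intro real_le_lsqrt) auto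
  show "w / 4 \<le> sqrt (2 * pi * m)"
    using \<open>(w / 4)\<^sup>2 \<le> 2 * pi * m\<close> by (rule real_le_rsqrt)
qed

lemma abs_diff_mult_of_nat_ge:
  fixes i j :: nat and c :: real
  assumes "i \<noteq> j" "0 \<le> c"
  shows "c \<le> \<bar>c * i - c * j\<bar>"
proof -
  have "1 \<le> \<bar>real i - real j\<bar>"
    using assms(1) by (cases i j rule: linorder_cases) auto
  then show ?thesis
    using assms(2) mult_left_mono[of 1 "\<bar>real i - real j\<bar>" c] by (simp add: abs_mult flip: right_diff_distrib)
qed

(* The point at height y on the n-th oscillation of the graph of sin (t^2): t^2 = 2\<pi>n + arcsin y. *)

definition chirp_point :: "nat \<Rightarrow> real \<Rightarrow> real \<times> real" where
  "chirp_point n y = (sqrt (2 * pi * n + arcsin y), y)"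

lemma snd_chirp_point [simp]: "snd (chirp_point n y) = y"
  by (simp add: chirp_point_def)

lemma chirp_point_mem_graph:
  assumes "0 \<le> y" "y \<le> 1"
  shows "chirp_point n y \<in> graph_of {0..} (\<lambda>t. sin (t\<^sup>2))"
proof -
  have "0 \<le> arcsin y"
    using assms by (simp add: arcsin_nonneg)
  moreover have "sin (2 * pi * n + arcsin y) = y"
    using sin_int_2pin[of "int n"] cos_int_2pin[of "int n"] assms by (simp add: sin_add)
  ultimately show ?thesis
    unfolding graph_of_def chirp_point_def by (intro image_eqI[of _ _ "sqrt (2 * pi * n + arcsin y)"]) auto
qed

lemma chirp_point_dist_gt:
  assumes "0 \<le> y" "y \<le> 1" "0 \<le> y'" "y' \<le> 1"
    and "n \<noteq> n' \<or> r < \<bar>y - y'\<bar>"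
    and "r * (fst (chirp_point n y) + fst (chirp_point n' y')) < pi"
  shows "r < dist (chirp_point n y) (chirp_point n' y')"
proof (cases "n = n'")
  case True
  then show ?thesis
    using assms(5) dist_snd_le[of "chirp_point n y" "chirp_point n' y'"]
    by (simp add: chirp_point_def dist_real_def)
next
  case False
  define u where "u = 2 * pi * n + arcsin y"
  define u' where "u' = 2 * pi * n' + arcsin y'"
  have arcsin: "0 \<le> arcsin y" "arcsin y \<le> pi / 2" "0 \<le> arcsin y'" "arcsin y' \<le> pi / 2"
    using assms(1-4) arcsin_nonneg arcsin_ubound by auto
  have "0 \<le> u" "0 \<le> u'"
    using arcsin by (simp_all add: u_def u'_def)
  have "2 * pi \<le> \<bar>2 * pi * real n - 2 * pi * real n'\<bar>"
    using False by (intro abs_diff_mult_of_nat_ge) auto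
  then have "pi \<le> \<bar>u - u'\<bar>"
    using arcsin unfolding u_def u'_def by linarith
  also have "\<dots> = \<bar>sqrt u - sqrt u'\<bar> * (sqrt u + sqrt u')"
    using \<open>0 \<le> u\<close> \<open>0 \<le> u'\<close> by (rule abs_diff_eq_abs_diff_sqrt_mult)
  finally have "r * (sqrt u + sqrt u') < \<bar>sqrt u - sqrt u'\<bar> * (sqrt u + sqrt u')"
    using assms(6) by (simp add: chirp_point_def u_def u'_def)
  then have "r < \<bar>sqrt u - sqrt u'\<bar>"
    using \<open>0 \<le> u\<close> \<open>0 \<le> u'\<close> by (simp add: mult_less_cancel_right)
  also have "\<dots> \<le> dist (chirp_point n y) (chirp_point n' y')"
    using dist_fst_le[of "chirp_point n y" "chirp_point n' y'"]
    by (simp add: chirp_point_def u_def u'_def dist_real_def)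
  finally show ?thesis .
qed

lemma fst_chirp_point_bounds:
  fixes m n :: nat and y R :: real
  assumes "m \<le> n" "0 \<le> y" "y \<le> 1" "0 \<le> R"
    and "2 * pi * (real n - real m) + pi / 2 \<le> R * sqrt (2 * pi * m)"
  shows "sqrt (2 * pi * m) \<le> fst (chirp_point n y)"
    and "fst (chirp_point n y) \<le> sqrt (2 * pi * m) + R / 2"
proof -
  define t where "t = sqrt (2 * pi * m)"
  define d where "d = 2 * pi * (real n - real m) + arcsin y"
  have "0 \<le> arcsin y" "arcsin y \<le> pi / 2"
    using assms(2,3) arcsin_nonneg arcsin_ubound by auto
  then have "0 \<le> d" "d \<le> R * t"
    using assms(1,5) by (simp_all add: d_def t_def)
  moreover have "fst (chirp_point n y) = sqrt (t\<^sup>2 + d)"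
    by (simp add: chirp_point_def t_def d_def algebra_simps)
  moreover have "0 \<le> t"
    by (simp add: t_def)
  ultimately show "t \<le> fst (chirp_point n y)" "fst (chirp_point n y) \<le> t + R / 2"
    using sqrt_add_le_sqrt_add_half[of "t\<^sup>2" R d] real_sqrt_le_mono[of "t\<^sup>2" "t\<^sup>2 + d"] assms(4)
    by simp_all
qed

(* The grid of points chirp_point n (2 r i) with m < n \<le> m + J and i < K: heights keeps it in
   heights [0, R/2], periods keeps it within horizontal distance R/2 of sqrt (2\<pi>m), and base puts
   it where distinct oscillations are more than r apart. *)

locale chirp_grid =
  fixes m J K :: nat and r R :: real
  assumes r: "0 < r" "r \<le> R" "R < 1"
    and heights: "4 * r * K \<le> R"
    and base: "2 * r * sqrt (2 * pi * m) \<le> 1"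
    and periods: "2 * pi * J + pi / 2 \<le> R * sqrt (2 * pi * m)"
begin

definition index :: "(nat \<times> nat) set" where
  "index = {m+1..m+J} \<times> {..<K}"

definition point :: "nat \<times> nat \<Rightarrow> real \<times> real" where
  "point = (\<lambda>(n, i). chirp_point n (2 * r * i))"

lemma height_bounds:
  assumes "i < K"
  shows "0 \<le> 2 * r * i" "2 * r * i \<le> R / 2"
proof -
  show "0 \<le> 2 * r * i"
    using r by simp
  have "4 * r * i \<le> 4 * r * K"
    using assms r by (intro mult_left_mono) auto
  with heights show "2 * r * i \<le> R / 2"
    by linarith
qed

lemma fst_point_bounds:
  assumes "(n, i) \<in> index"
  shows "sqrt (2 * pi * m) \<le> fst (point (n, i))" "fst (point (n, i)) \<le> sqrt (2 * pi * m) + R / 2"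
proof -
  have "2 * pi * (real n - real m) \<le> 2 * pi * J"
    using assms by (intro mult_left_mono) (auto simp: index_def)
  with periods have "2 * pi * (real n - real m) + pi / 2 \<le> R * sqrt (2 * pi * m)"
    by linarith
  then show "sqrt (2 * pi * m) \<le> fst (point (n, i))" "fst (point (n, i)) \<le> sqrt (2 * pi * m) + R / 2"
    using fst_chirp_point_bounds[of m n "2 * r * i" R] height_bounds[of i] assms r
    by (auto simp: point_def index_def)
qed

lemma point_mem_cball_graph:
  assumes "(n, i) \<in> index"
  shows "point (n, i) \<in> cball (chirp_point m 0) R \<inter> graph_of {0..} (\<lambda>t. sin (t\<^sup>2))"
proof
  show "point (n, i) \<in> graph_of {0..} (\<lambda>t. sin (t\<^sup>2))"
    using assms height_bounds[of i] r by (auto simp: point_def index_def intro: chirp_point_mem_graph)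
  have "dist (chirp_point m 0) (point (n, i))
      \<le> \<bar>sqrt (2 * pi * m) - fst (point (n, i))\<bar> + \<bar>0 - snd (point (n, i))\<bar>"
    using dist_le_abs_fst_plus_abs_snd[of "chirp_point m 0" "point (n, i)"] by (simp add: chirp_point_def)
  also have "\<dots> \<le> R"
    using fst_point_bounds[OF assms] height_bounds[of i] assms by (simp add: point_def index_def)
  finally show "point (n, i) \<in> cball (chirp_point m 0) R"
    by simp
qed

lemma point_separated:
  assumes "(n, i) \<in> index" "(n', i') \<in> index" "(n, i) \<noteq> (n', i')"
  shows "r < dist (point (n, i)) (point (n', i'))"
proof -
  have "n \<noteq> n' \<or> r < \<bar>2 * r * i - 2 * r * i'\<bar>"
    using assms(3) abs_diff_mult_of_nat_ge[of i i' "2 * r"] r by fastforce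
  moreover have "r * (fst (point (n, i)) + fst (point (n', i'))) < pi"
  proof -
    have "r * (fst (point (n, i)) + fst (point (n', i'))) \<le> r * (2 * sqrt (2 * pi * m) + R)"
      using fst_point_bounds[OF assms(1)] fst_point_bounds[OF assms(2)] r by (intro mult_left_mono) auto
    moreover have "r * R < 1"
      using r mult_strict_mono[of r 1 R 1] by simp
    ultimately show ?thesis
      using base pi_gt3 by (simp add: algebra_simps)
  qed
  moreover have "0 \<le> 2 * r * i" "2 * r * i \<le> 1" "0 \<le> 2 * r * i'" "2 * r * i' \<le> 1"
    using height_bounds[of i] height_bounds[of i'] assms(1,2) r by (auto simp: index_def)
  ultimately show ?thesis
    unfolding point_def by (simp add: chirp_point_dist_gt)
qed

lemma grid_le_cover_number:
  "J * K \<le> cover_number (cball (chirp_point m 0) R \<inter> graph_of {0..} (\<lambda>t. sin (t\<^sup>2))) r"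
proof -
  have "inj_on point index"
  proof (rule inj_onI)
    fix a b assume "a \<in> index" "b \<in> index" "point a = point b"
    then show "a = b"
      using point_separated[of "fst a" "snd a" "fst b" "snd b"] r by force
  qed
  then have "J * K = card (point ` index)"
    by (simp add: card_image index_def card_cartesian_product)
  also have "\<dots> \<le> cover_number (cball (chirp_point m 0) R \<inter> graph_of {0..} (\<lambda>t. sin (t\<^sup>2))) r"
  proof (rule card_le_cover_number)
    show "point ` index \<subseteq> cball (chirp_point m 0) R \<inter> graph_of {0..} (\<lambda>t. sin (t\<^sup>2))"
      using point_mem_cball_graph by auto
    fix p q assume "p \<in> point ` index" "q \<in> point ` index" "p \<noteq> q"
    then show "r < dist p q"
      using point_separated by auto
  qed (use r in \<open>simp_all add: bounded_Int\<close>)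
  finally show ?thesis .
qed

end

lemma chirp_cover_number_ge:
  fixes r R :: real
  assumes r: "0 < r" "32 * pi * r \<le> R" "R < 1"
  shows "\<exists>z\<in>graph_of {0..} (\<lambda>t. sin (t\<^sup>2)).
    (R / r)\<^sup>2 / (256 * pi) \<le> real (cover_number (cball z R \<inter> graph_of {0..} (\<lambda>t. sin (t\<^sup>2))) r)"
proof -
  define X where "X = R / r"
  have "r \<le> R"
    using r mult_right_mono[of 1 "32 * pi" r] pi_gt3 by linarith
  have X: "32 * pi \<le> X" "X \<le> 1 / r"
    using r by (simp_all add: X_def field_simps)
  then obtain m :: nat where t: "1 / r / 4 \<le> sqrt (2 * pi * m)" "sqrt (2 * pi * m) \<le> 1 / r / 2"
    using exists_sqrt_2pi_nat_between[of "1 / r"] pi_gt3 by force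
  define t where "t = sqrt (2 * pi * m)"
  define J where "J = nat \<lfloor>R * t / (4 * pi)\<rfloor>"
  define K where "K = nat \<lfloor>X / 4\<rfloor>"
  have "X / 4 \<le> R * t"
    using t r \<open>r \<le> R\<close> mult_left_mono[of "1 / r / 4" t R] by (simp add: X_def t_def)
  have J: "real J \<le> R * t / (4 * pi)" "R * t / (4 * pi) - 1 < real J"
    and K: "real K \<le> X / 4" "X / 4 - 1 < real K"
    using of_nat_floor real_nat_floor_gt_diff_one r \<open>r \<le> R\<close> unfolding J_def K_def t_def X_def
    by auto
  interpret chirp_grid m J K r R
  proof (unfold_locales, fold t_def)
    show "4 * r * K \<le> R"
      using K r mult_left_mono[of K "X / 4" "4 * r"] by (simp add: X_def)
    show "2 * r * t \<le> 1"
      using t r by (simp add: t_def field_simps)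
    show "2 * pi * J + pi / 2 \<le> R * t"
      using J \<open>X / 4 \<le> R * t\<close> X pi_gt_zero by (simp add: field_simps)
  qed (use r \<open>r \<le> R\<close> in auto)
  have "X / (32 * pi) \<le> real J" "X / 8 \<le> real K"
    using J K \<open>X / 4 \<le> R * t\<close> X pi_gt3 by (simp_all add: field_simps)
  then have "X / (32 * pi) * (X / 8) \<le> real J * real K"
    using X pi_gt3 by (intro mult_mono) auto
  moreover have "real J * real K \<le> real (cover_number (cball (chirp_point m 0) R \<inter> graph_of {0..} (\<lambda>t. sin (t\<^sup>2))) r)"
    using grid_le_cover_number by (simp flip: of_nat_mult)
  moreover have "X / (32 * pi) * (X / 8) = (R / r)\<^sup>2 / (256 * pi)"
    by (simp add: X_def power2_eq_square)
  ultimately show ?thesis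
    using chirp_point_mem_graph[of 0 m] by (intro bexI[of _ "chirp_point m 0"]) auto
qed

lemma assouad_spectrum_chirp_ge_two:
  fixes \<theta> :: real
  assumes "0 < \<theta>" "\<theta> < 1"
  shows "2 \<le> assouad_spectrum \<theta> (graph_of {0..} (\<lambda>t. sin (t\<^sup>2)))"
proof (rule le_assouad_spectrum[OF assms, of "1 / (256 * pi)"])
  have "\<forall>\<^sub>F R in at_right 0. 32 * pi * R powr (1 / \<theta>) \<le> R"
    using assms by real_asymp
  moreover have "\<forall>\<^sub>F R in at_right 0. R \<in> {0<..<1::real}"
    by (rule eventually_at_right_real) simp
  ultimately show "\<forall>\<^sub>F R in at_right 0. \<exists>z\<in>graph_of {0..} (\<lambda>t. sin (t\<^sup>2)).
      1 / (256 * pi) * (R / R powr (1 / \<theta>)) powr 2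
        \<le> real (cover_number (cball z R \<inter> graph_of {0..} (\<lambda>t. sin (t\<^sup>2))) (R powr (1 / \<theta>)))"
  proof eventually_elim
    case (elim R)
    then show ?case
      using chirp_cover_number_ge[of "R powr (1 / \<theta>)" R] by (simp add: powr_numeral)
  qed
qed simp

lemma abs_sin_diff_le:
  fixes a b :: real
  shows "\<bar>sin a - sin b\<bar> \<le> \<bar>a - b\<bar>"
proof -
  have "\<bar>sin a - sin b\<bar> = 2 * \<bar>sin ((a - b) / 2)\<bar> * \<bar>cos ((a + b) / 2)\<bar>"
    by (simp add: sin_diff_sin abs_mult)
  also have "\<dots> \<le> 2 * \<bar>sin ((a - b) / 2)\<bar>"
    by (simp add: mult_left_le)
  also have "\<dots> \<le> \<bar>a - b\<bar>"
    using abs_sin_x_le_abs_x[of "(a - b) / 2"] by simp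
  finally show ?thesis .
qed

theorem corollary4p8:
  fixes \<theta> :: real
  assumes "0 < \<theta>" and "\<theta> < 1"
  shows "\<exists>(I :: real set) (g :: real \<Rightarrow> real) (h :: real \<Rightarrow> real).
           is_interval I \<and> continuous_on I g \<and> continuous_on I h \<and>
           assouad_spectrum \<theta> (graph_of I (\<lambda>t. g t + h t)) >
             max (assouad_spectrum \<theta> (graph_of I g)) (assouad_spectrum \<theta> (graph_of I h))"
proof -
  define g where "g t = sin (t\<^sup>2) + (t\<^sup>2 + t)" for t :: real
  define h where "h t = - (t\<^sup>2 + t)" for t :: real
  have "assouad_spectrum \<theta> (graph_of {0..} g) \<le> 1"
  proof (rule assouad_spectrum_graph_nonneg_le_one)
    fix x y :: real assume "0 \<le> x" "x \<le> y"
    then show "y - x \<le> \<bar>g y - g x\<bar>"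
      using power_mono[of x y 2] abs_sin_diff_le[of "y\<^sup>2" "x\<^sup>2"] by (simp add: g_def)
  qed (use assms in auto)
  moreover have "assouad_spectrum \<theta> (graph_of {0..} h) \<le> 1"
  proof (rule assouad_spectrum_graph_nonneg_le_one)
    fix x y :: real assume "0 \<le> x" "x \<le> y"
    then show "y - x \<le> \<bar>h y - h x\<bar>"
      using power_mono[of x y 2] unfolding h_def by linarith
  qed (use assms in auto)
  moreover have "(\<lambda>t. g t + h t) = (\<lambda>t. sin (t\<^sup>2))"
    by (simp add: g_def h_def)
  moreover have "continuous_on {0..} g" "continuous_on {0..} h"
    unfolding g_def h_def by (auto intro!: continuous_intros)
  ultimately show ?thesis
    using assouad_spectrum_chirp_ge_two[OF assms] is_interval_ci
    by (intro exI[of _ "{0..}"] exI[of _ g] exI[of _ h]) auto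
qed

end
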